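(* Let $\Psi\in\Lambda'$ satisfy ${}^{\gamma}\Psi=\Psi$ and $\det\Psi\in\mathbb{C}^*$ (a nonzero complex constant). Then there exists $\alpha\in\mathbb{C}^*$ such that $\Psi=\begin{pmatrix}\alpha&0\\0&\overline{\alpha}\end{pmatrix}$.
   Context: Fix an odd integer $n=2m+1\ge3$, variables $a,b$, and $T=ab$. Let $\Lambda'$ be the group of matrices $M=\begin{pmatrix}P(T)& a^nQ(T)\\ b^nS(T)& R(T)\end{pmatrix}$ with $P,Q,R,S\in\mathbb{C}[T,T^{-1}]$ and $\det M=cT^k$ for some $c\in\mathbb{C}^*$, $k\in\mathbb{Z}$. For such $M$ define ${}^{\gamma}M=\begin{pmatrix}\overline{R}(T)& a^n\overline{S}(T)\\ b^n\overline{Q}(T)& \overline{P}(T)\end{pmatrix}$, where $\overline{P}$ denotes the Laurent polynomial obtained by complex-conjugating the coefficients of $P$. *)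

theory Defs
  imports Complex_Main "HOL-Library.Poly_Mapping"
begin

text \<open>Laurent polynomials C[T,T^-1], realised as the group algebra of (int,+) over C:
  finitely supported coefficient maps int =>0 complex with convolution product.\<close>
type_synonym lpoly = "int \<Rightarrow>\<^sub>0 complex"

definition Tpow :: "int \<Rightarrow> lpoly" where
  "Tpow k = Poly_Mapping.single k 1"

definition lconst :: "complex \<Rightarrow> lpoly" where
  "lconst c = Poly_Mapping.single 0 c"

definition lconj :: "lpoly \<Rightarrow> lpoly" where
  "lconj P = Poly_Mapping.map cnj P"

text \<open>A matrix (P(T), a^n Q(T); b^n S(T), R(T)) is encoded by its tuple (P, Q, R, S);
  since a and b are independent variables this encoding is injective.\<close>
type_synonym lmat = "lpoly \<times> lpoly \<times> lpoly \<times> lpoly"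

text \<open>det = P R - a^n b^n Q S = P R - T^n Q S.\<close>
definition ldet :: "nat \<Rightarrow> lmat \<Rightarrow> lpoly" where
  "ldet n M = (case M of (P, Q, R, S) \<Rightarrow> P * R - Tpow (int n) * Q * S)"

definition Lambda' :: "nat \<Rightarrow> lmat set" where
  "Lambda' n = {M. \<exists>c k. c \<noteq> 0 \<and> ldet n M = lconst c * Tpow k}"

definition gamma_act :: "lmat \<Rightarrow> lmat" where
  "gamma_act M = (case M of (P, Q, R, S) \<Rightarrow> (lconj R, lconj S, lconj P, lconj Q))"

end

(* For \<Psi> = (P, Q, R, S) fixed by \<gamma> we have R = P\<^sup>* and S = Q\<^sup>*, so det \<Psi> = P P\<^sup>* - T\<^sup>n Q Q\<^sup>*.
   Taking the top (and bottom) degree is additive, and conjugation preserves degrees, so the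
   extreme degrees of P P\<^sup>* are even while those of T\<^sup>n Q Q\<^sup>* are odd: no cancellation can occur
   between the two. If the determinant is constant and Q \<noteq> 0, then the top degree of T\<^sup>n Q Q\<^sup>*
   must be negative and its bottom degree positive, which is absurd. Hence Q = 0, and
   P P\<^sup>* constant forces P constant. *)

theory Submission
  imports Defs
begin

lemma lookup_mult_unique_sum:
  fixes f g :: "'a::monoid_add \<Rightarrow>\<^sub>0 'b::semiring_0"
  assumes unique: "\<And>l q. l \<in> Poly_Mapping.keys f \<Longrightarrow> q \<in> Poly_Mapping.keys g \<Longrightarrow>
      l + q = a + b \<Longrightarrow> l = a \<and> q = b"
  shows "Poly_Mapping.lookup (f * g) (a + b) = Poly_Mapping.lookup f a * Poly_Mapping.lookup g b"
proof -
  have "Poly_Mapping.lookup f l * Sum_any (\<lambda>q. Poly_Mapping.lookup g q when a + b = l + q)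
      = (if l = a then Poly_Mapping.lookup f a * Poly_Mapping.lookup g b else 0)" for l
  proof (cases "l \<in> Poly_Mapping.keys f")
    case True
    have "(\<lambda>q. Poly_Mapping.lookup g q when a + b = l + q)
        = (\<lambda>q. if q = b then (Poly_Mapping.lookup g b when l = a) else 0)"
      using unique[OF True] by (force simp: fun_eq_iff when_def in_keys_iff)
    then have "Sum_any (\<lambda>q. Poly_Mapping.lookup g q when a + b = l + q)
        = (Poly_Mapping.lookup g b when l = a)"
      by (simp only: Sum_any.delta)
    then show ?thesis by (simp add: when_def)
  qed (auto simp: in_keys_iff)
  then show ?thesis
    by (simp add: lookup_mult)
qed

lemma add_eq_add_of_le_imp_eq:
  fixes a b l q :: "'a::ordered_cancel_ab_semigroup_add"
  assumes "l \<le> a" "q \<le> b" "l + q = a + b"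
  shows "l = a \<and> q = b"
proof -
  have "l + q \<le> a + q" "a + q \<le> a + b"
    using assms(1,2) by (simp_all add: add_right_mono add_left_mono)
  then have "a + q = a + b"
    using assms(3) by (intro order.antisym) simp_all
  then show ?thesis
    using assms(3) by simp
qed

lemma Max_keys_mult:
  fixes f g :: "'a::{linordered_cancel_ab_semigroup_add, comm_monoid_add} \<Rightarrow>\<^sub>0
    'b::{semiring_0, semiring_no_zero_divisors}"
  assumes "f \<noteq> 0" "g \<noteq> 0"
  shows "Max (Poly_Mapping.keys (f * g)) = Max (Poly_Mapping.keys f) + Max (Poly_Mapping.keys g)"
proof -
  let ?a = "Max (Poly_Mapping.keys f)" and ?b = "Max (Poly_Mapping.keys g)"
  have a: "?a \<in> Poly_Mapping.keys f" "\<And>l. l \<in> Poly_Mapping.keys f \<Longrightarrow> l \<le> ?a"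
    and b: "?b \<in> Poly_Mapping.keys g" "\<And>q. q \<in> Poly_Mapping.keys g \<Longrightarrow> q \<le> ?b"
    using assms by auto
  have "Poly_Mapping.lookup (f * g) (?a + ?b) = Poly_Mapping.lookup f ?a * Poly_Mapping.lookup g ?b"
    by (rule lookup_mult_unique_sum, rule add_eq_add_of_le_imp_eq) (auto intro: a(2) b(2))
  then have "?a + ?b \<in> Poly_Mapping.keys (f * g)"
    using a(1) b(1) by (simp add: in_keys_iff)
  moreover have "k \<le> ?a + ?b" if "k \<in> Poly_Mapping.keys (f * g)" for k
    using that keys_mult[of f g] a(2) b(2) by (force intro: add_mono)
  ultimately show ?thesis
    by (intro Max_eqI) auto
qed

lemma Min_keys_mult:
  fixes f g :: "'a::{linordered_cancel_ab_semigroup_add, comm_monoid_add} \<Rightarrow>\<^sub>0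
    'b::{semiring_0, semiring_no_zero_divisors}"
  assumes "f \<noteq> 0" "g \<noteq> 0"
  shows "Min (Poly_Mapping.keys (f * g)) = Min (Poly_Mapping.keys f) + Min (Poly_Mapping.keys g)"
proof -
  let ?a = "Min (Poly_Mapping.keys f)" and ?b = "Min (Poly_Mapping.keys g)"
  have a: "?a \<in> Poly_Mapping.keys f" "\<And>l. l \<in> Poly_Mapping.keys f \<Longrightarrow> ?a \<le> l"
    and b: "?b \<in> Poly_Mapping.keys g" "\<And>q. q \<in> Poly_Mapping.keys g \<Longrightarrow> ?b \<le> q"
    using assms by auto
  have "Poly_Mapping.lookup (f * g) (?a + ?b) = Poly_Mapping.lookup f ?a * Poly_Mapping.lookup g ?b"
    using a(2) b(2) add_eq_add_of_le_imp_eq[of ?a _ ?b] by (intro lookup_mult_unique_sum) (metis add.commute)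
  then have "?a + ?b \<in> Poly_Mapping.keys (f * g)"
    using a(1) b(1) by (simp add: in_keys_iff)
  moreover have "?a + ?b \<le> k" if "k \<in> Poly_Mapping.keys (f * g)" for k
    using that keys_mult[of f g] a(2) b(2) by (force intro: add_mono)
  ultimately show ?thesis
    by (intro Min_eqI) auto
qed

lemma not_in_keys_above_Max: "Max (Poly_Mapping.keys f) < k \<Longrightarrow> k \<notin> Poly_Mapping.keys f"
  by (metis Max_ge finite_keys leD)

lemma not_in_keys_below_Min: "k < Min (Poly_Mapping.keys f) \<Longrightarrow> k \<notin> Poly_Mapping.keys f"
  by (metis Min_le finite_keys leD)

lemma Max_keys_diff_mem:
  fixes A B :: "'a::linorder \<Rightarrow>\<^sub>0 'b::ab_group_add"
  assumes "A \<noteq> 0" "B \<noteq> 0" "Max (Poly_Mapping.keys A) \<noteq> Max (Poly_Mapping.keys B)"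
  shows "max (Max (Poly_Mapping.keys A)) (Max (Poly_Mapping.keys B)) \<in> Poly_Mapping.keys (A - B)"
proof -
  have top: "Max (Poly_Mapping.keys C) \<in> Poly_Mapping.keys (C - D)"
    if "C \<noteq> 0" "Max (Poly_Mapping.keys D) < Max (Poly_Mapping.keys C)" for C D :: "'a \<Rightarrow>\<^sub>0 'b"
    using that not_in_keys_above_Max[OF that(2)] Max_in[of "Poly_Mapping.keys C"]
    by (auto simp: in_keys_iff lookup_minus)
  show ?thesis
  proof (cases "Max (Poly_Mapping.keys A) < Max (Poly_Mapping.keys B)")
    case True
    then show ?thesis
      using top[OF assms(2) True] keys_minus[of "B - A"] max.absorb2[OF less_imp_le[OF True]]
      by simp
  next
    case False
    then show ?thesis
      using top[OF assms(1)] assms(3) by (simp add: max_def)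
  qed
qed

lemma Min_keys_diff_mem:
  fixes A B :: "'a::linorder \<Rightarrow>\<^sub>0 'b::ab_group_add"
  assumes "A \<noteq> 0" "B \<noteq> 0" "Min (Poly_Mapping.keys A) \<noteq> Min (Poly_Mapping.keys B)"
  shows "min (Min (Poly_Mapping.keys A)) (Min (Poly_Mapping.keys B)) \<in> Poly_Mapping.keys (A - B)"
proof -
  have bot: "Min (Poly_Mapping.keys C) \<in> Poly_Mapping.keys (C - D)"
    if "C \<noteq> 0" "Min (Poly_Mapping.keys C) < Min (Poly_Mapping.keys D)" for C D :: "'a \<Rightarrow>\<^sub>0 'b"
    using that not_in_keys_below_Min[OF that(2)] Min_in[of "Poly_Mapping.keys C"]
    by (auto simp: in_keys_iff lookup_minus)
  show ?thesis
  proof (cases "Min (Poly_Mapping.keys A) < Min (Poly_Mapping.keys B)")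
    case True
    then show ?thesis
      using bot[OF assms(1)] by (auto simp: min_def)
  next
    case False
    with assms(3) have "Min (Poly_Mapping.keys B) < Min (Poly_Mapping.keys A)"
      by simp
    then show ?thesis
      using bot[OF assms(2)] keys_minus[of "B - A"] min.absorb2[OF less_imp_le] by simp
  qed
qed

lemma lookup_lconj [simp]: "Poly_Mapping.lookup (lconj P) k = cnj (Poly_Mapping.lookup P k)"
  by (simp add: lconj_def map.rep_eq when_def)

lemma keys_lconj [simp]: "Poly_Mapping.keys (lconj P) = Poly_Mapping.keys P"
  by (auto simp: in_keys_iff)

lemma lconj_eq_0_iff [simp]: "lconj f = 0 \<longleftrightarrow> f = 0"
  by (metis keys_eq_empty keys_lconj)

lemma mult_lconj_eq_0_iff [simp]: "f * lconj f = 0 \<longleftrightarrow> f = 0"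
  by simp

lemma lconj_0 [simp]: "lconj 0 = 0"
  by (rule poly_mapping_eqI) simp

lemma lconj_lconst [simp]: "lconj (lconst c) = lconst (cnj c)"
  by (rule poly_mapping_eqI) (simp add: lconst_def lookup_single when_def)

lemma lconst_eq_0_iff [simp]: "lconst c = 0 \<longleftrightarrow> c = 0"
  by (metis lconst_def lookup_single_eq single_zero)

lemma keys_Tpow [simp]: "Poly_Mapping.keys (Tpow k) = {k}"
  by (simp add: Tpow_def)

lemma Tpow_nonzero [simp]: "Tpow k \<noteq> 0"
  by (metis empty_not_insert keys_Tpow keys_zero)

lemma Max_keys_mult_lconj:
  assumes "f \<noteq> 0"
  shows "Max (Poly_Mapping.keys (f * lconj f)) = 2 * Max (Poly_Mapping.keys f)"
  using Max_keys_mult[OF assms] assms by simp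

lemma Min_keys_mult_lconj:
  assumes "f \<noteq> 0"
  shows "Min (Poly_Mapping.keys (f * lconj f)) = 2 * Min (Poly_Mapping.keys f)"
  using Min_keys_mult[OF assms] assms by simp

lemma Max_keys_Tpow_mult:
  assumes "f \<noteq> 0"
  shows "Max (Poly_Mapping.keys (Tpow k * f)) = k + Max (Poly_Mapping.keys f)"
  using Max_keys_mult[of "Tpow k" f] assms by simp

lemma Min_keys_Tpow_mult:
  assumes "f \<noteq> 0"
  shows "Min (Poly_Mapping.keys (Tpow k * f)) = k + Min (Poly_Mapping.keys f)"
  using Min_keys_mult[of "Tpow k" f] assms by simp

lemma odd_shift_mult_lconj_diff_const_imp_zero:
  fixes P Q :: lpoly and n :: int
  assumes "odd n"
    and const: "Poly_Mapping.keys (P * lconj P - Tpow n * (Q * lconj Q)) \<subseteq> {0}"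
  shows "Q = 0"
proof (rule ccontr)
  assume "Q \<noteq> 0"
  define B where "B = Tpow n * (Q * lconj Q)"
  have "B \<noteq> 0"
    using \<open>Q \<noteq> 0\<close> by (simp add: B_def)
  have odd_ends: "odd (Max (Poly_Mapping.keys B))" "odd (Min (Poly_Mapping.keys B))"
    using \<open>Q \<noteq> 0\<close> \<open>odd n\<close>
    by (simp_all add: B_def Max_keys_Tpow_mult Min_keys_Tpow_mult Max_keys_mult_lconj Min_keys_mult_lconj)
  show False
  proof (cases "P = 0")
    case True
    then have "Max (Poly_Mapping.keys B) \<in> Poly_Mapping.keys (P * lconj P - B)"
      using \<open>B \<noteq> 0\<close> by simp
    then show False
      using const odd_ends by (auto simp: B_def)
  next
    case False
    let ?A = "P * lconj P"
    have "?A \<noteq> 0"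
      using False by simp
    have even_ends: "even (Max (Poly_Mapping.keys ?A))" "even (Min (Poly_Mapping.keys ?A))"
      using False by (simp_all add: Max_keys_mult_lconj Min_keys_mult_lconj)
    then have "Max (Poly_Mapping.keys ?A) \<noteq> Max (Poly_Mapping.keys B)"
      "Min (Poly_Mapping.keys ?A) \<noteq> Min (Poly_Mapping.keys B)"
      using odd_ends by auto
    then have "max (Max (Poly_Mapping.keys ?A)) (Max (Poly_Mapping.keys B)) = 0"
      "min (Min (Poly_Mapping.keys ?A)) (Min (Poly_Mapping.keys B)) = 0"
      using Max_keys_diff_mem Min_keys_diff_mem \<open>?A \<noteq> 0\<close> \<open>B \<noteq> 0\<close> const
      unfolding B_def by blast+
    moreover have "Max (Poly_Mapping.keys B) \<noteq> 0" "Min (Poly_Mapping.keys B) \<noteq> 0"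
      using odd_ends by auto
    ultimately have "Max (Poly_Mapping.keys B) < 0" "0 < Min (Poly_Mapping.keys B)"
      by (auto simp: max_def min_def split: if_splits)
    moreover have "Min (Poly_Mapping.keys B) \<le> Max (Poly_Mapping.keys B)"
      using \<open>B \<noteq> 0\<close> by simp
    ultimately show False
      by simp
  qed
qed

lemma eq_lconst_if_keys_subset_0:
  "Poly_Mapping.keys f \<subseteq> {0} \<Longrightarrow> f = lconst (Poly_Mapping.lookup f 0)"
  by (rule poly_mapping_eqI) (auto simp: lconst_def lookup_single when_def in_keys_iff)

lemma mult_lconj_const_imp_const:
  fixes f :: lpoly
  assumes "Poly_Mapping.keys (f * lconj f) \<subseteq> {0}"
  shows "f = lconst (Poly_Mapping.lookup f 0)"
proof (cases "f = 0")
  case False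
  then have "f * lconj f \<noteq> 0"
    by simp
  then have "Max (Poly_Mapping.keys f) = 0" "Min (Poly_Mapping.keys f) = 0"
    using assms Max_in[of "Poly_Mapping.keys (f * lconj f)"]
      Min_in[of "Poly_Mapping.keys (f * lconj f)"]
    by (auto simp: Max_keys_mult_lconj[OF False] Min_keys_mult_lconj[OF False])
  then have "Poly_Mapping.keys f \<subseteq> {0}"
    by (metis Max_ge Min_le finite_keys order.antisym singleton_iff subsetI)
  then show ?thesis
    by (rule eq_lconst_if_keys_subset_0)
qed (simp add: lconst_def)

theorem lemma3p4:
  fixes n m :: nat and \<Psi> :: lmat
  assumes "n = 2 * m + 1" and "n \<ge> 3"
    and "\<Psi> \<in> Lambda' n"
    and "gamma_act \<Psi> = \<Psi>"
    and "\<exists>c. c \<noteq> 0 \<and> ldet n \<Psi> = lconst c"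
  shows "\<exists>\<alpha>::complex. \<alpha> \<noteq> 0 \<and> \<Psi> = (lconst \<alpha>, 0, lconst (cnj \<alpha>), 0)"
proof -
  obtain P Q where \<Psi>: "\<Psi> = (P, Q, lconj P, lconj Q)"
    using assms(4) by (cases \<Psi>) (auto simp: gamma_act_def)
  obtain c where "c \<noteq> 0" and det: "P * lconj P - Tpow (int n) * (Q * lconj Q) = lconst c"
    using assms(5) by (auto simp: \<Psi> ldet_def mult.assoc)
  then have keys_det: "Poly_Mapping.keys (P * lconj P - Tpow (int n) * (Q * lconj Q)) \<subseteq> {0}"
    by (simp add: lconst_def)
  have "Q = 0"
    using assms(1) keys_det by (intro odd_shift_mult_lconj_diff_const_imp_zero[of "int n"]) auto
  then have P: "P = lconst (Poly_Mapping.lookup P 0)"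
    using keys_det mult_lconj_const_imp_const by simp
  moreover have "P \<noteq> 0"
  proof
    assume "P = 0"
    with det \<open>Q = 0\<close> have "lconst c = 0"
      by simp
    with \<open>c \<noteq> 0\<close> show False
      by simp
  qed
  then have "Poly_Mapping.lookup P 0 \<noteq> 0"
    using P by (metis lconst_eq_0_iff)
  ultimately show ?thesis
    using \<Psi> \<open>Q = 0\<close> by (metis lconj_0 lconj_lconst)
qed

end
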